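(* Let $[x]_{ap}$ be a maximal ap-basic class (an ap-quasiattractor). Then for $z\in M$ we have $x<_{ap}z$ if and only if $z\in[x]_{ap}$. In particular, every ap-quasiattractor is compact.
   Context: Let $M\subset\mathbb{R}^d$ be closed. Let $F:M\to M$ be continuous with $\sup_{x\in M}\|F(x)\|<\infty$. Let $d(x,y)=\max_i|x_i-y_i|$. Suppose $M=M_0\cup M_1$ (disjoint) with $M_0$ closed, $F(M_0)\subseteq M_0$ and $F(M_1)\subseteq M_1$. ap-chain recurrence. For $\delta>0$, an ap $\delta$-pseudoorbit joining $x$ to $y$ is a tuple $(\xi_0,\dots,\xi_n)\in M^{n+1}$, $n\ge1$, with: - $\xi_0=x$ and $\xi_n=y$; - $\xi_i\in M_0\Rightarrow\xi_{i+1}\in M_0$; - $d(\xi_{i+1},F(\xi_i))<\delta$ for all $i$. Write $x<_{ap}y$ if for every $\delta>0$ such a pseudoorbit exists, and $x\sim_{ap}y$ if both $x<_{ap}y$ and $y<_{ap}x$. Let $\mathcal{R}_{ap}=\{x:x\sim_{ap}x\}$. The ap-basic classes are the equivalence classes $[x]_{ap}$ of $\sim_{ap}$ on $\mathcal{R}_{ap}$. Write $[x]_{ap}<_{ap}[y]_{ap}$ if $x<_{ap}y$. An ap-quasiattractor is a maximal ap-basic class, i.e. one such that $[x]_{ap}<_{ap}[y]_{ap}$ implies $[x]_{ap}=[y]_{ap}$. *)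

theory Defs
  imports "HOL-Analysis.Analysis"
begin

text \<open>Points of R^d are modelled as vectors of type real^'n (d = CARD('n)).
  The metric is the maximum metric d(x,y) = max_i |x_i - y_i|.\<close>

definition dmax :: "real^'n \<Rightarrow> real^'n \<Rightarrow> real" where
  "dmax x y = Max (range (\<lambda>i. \<bar>x $ i - y $ i\<bar>))"

definition ap_pseudoorbit ::
  "(real^'n) set \<Rightarrow> (real^'n) set \<Rightarrow> (real^'n \<Rightarrow> real^'n) \<Rightarrow> real \<Rightarrow>
   real^'n \<Rightarrow> real^'n \<Rightarrow> (nat \<Rightarrow> real^'n) \<Rightarrow> nat \<Rightarrow> bool" where
  "ap_pseudoorbit M M0 F \<delta> x y \<xi> n \<longleftrightarrow>
     n \<ge> 1 \<and> (\<forall>i\<le>n. \<xi> i \<in> M) \<and> \<xi> 0 = x \<and> \<xi> n = y \<and>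
     (\<forall>i<n. \<xi> i \<in> M0 \<longrightarrow> \<xi> (Suc i) \<in> M0) \<and>
     (\<forall>i<n. dmax (\<xi> (Suc i)) (F (\<xi> i)) < \<delta>)"

definition ap_less ::
  "(real^'n) set \<Rightarrow> (real^'n) set \<Rightarrow> (real^'n \<Rightarrow> real^'n) \<Rightarrow> real^'n \<Rightarrow> real^'n \<Rightarrow> bool" where
  "ap_less M M0 F x y \<longleftrightarrow> (\<forall>\<delta>>0. \<exists>\<xi> n. ap_pseudoorbit M M0 F \<delta> x y \<xi> n)"

definition ap_equiv ::
  "(real^'n) set \<Rightarrow> (real^'n) set \<Rightarrow> (real^'n \<Rightarrow> real^'n) \<Rightarrow> real^'n \<Rightarrow> real^'n \<Rightarrow> bool" where
  "ap_equiv M M0 F x y \<longleftrightarrow> ap_less M M0 F x y \<and> ap_less M M0 F y x"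

definition R_ap :: "(real^'n) set \<Rightarrow> (real^'n) set \<Rightarrow> (real^'n \<Rightarrow> real^'n) \<Rightarrow> (real^'n) set" where
  "R_ap M M0 F = {x \<in> M. ap_equiv M M0 F x x}"

definition ap_class ::
  "(real^'n) set \<Rightarrow> (real^'n) set \<Rightarrow> (real^'n \<Rightarrow> real^'n) \<Rightarrow> real^'n \<Rightarrow> (real^'n) set" where
  "ap_class M M0 F x = {y \<in> R_ap M M0 F. ap_equiv M M0 F x y}"

definition ap_quasiattractor_of ::
  "(real^'n) set \<Rightarrow> (real^'n) set \<Rightarrow> (real^'n \<Rightarrow> real^'n) \<Rightarrow> real^'n \<Rightarrow> bool" where
  "ap_quasiattractor_of M M0 F x \<longleftrightarrow> x \<in> R_ap M M0 F \<and>
     (\<forall>y \<in> R_ap M M0 F. ap_less M M0 F x y \<longrightarrow> ap_class M M0 F x = ap_class M M0 F y)"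

end

theory Submission imports Defs begin

text \<open>
  Fix an ap-quasiattractor [x].  One direction of the characterisation is
  trivial.  For the other, let x <ap z.  Every point z of M lies ap-below some
  ap-recurrent point y: take y in the omega-limit set of z (nonempty because F(M) is
  bounded), or, if that limit point lies in M0 while z does not, one more omega-limit
  point of it.  Then x <ap z <ap y, so maximality of [x] gives y ~ap x, whence
  z <ap x and z belongs to [x].

  Hence [x] equals the forward set {z in M. x <ap z}.  This set is closed, because
  the last point of a pseudoorbit may be moved slightly (M0 being closed, a point
  near a point of M0 lies in M0 or the original point is outside M0), and it is
  bounded, because every endpoint of a 1-pseudoorbit lies within distance 1 of F(M).
\<close>

lemma dmax_component_le: "\<bar>x $ i - y $ i\<bar> \<le> dmax x y"
  unfolding dmax_def by (rule Max_ge) auto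

lemma dmax_nonneg: "0 \<le> dmax x y"
  using dmax_component_le[of x undefined y] by linarith

lemma dmax_self: "dmax x x = 0"
  unfolding dmax_def by simp

lemma dmax_le_dist: "dmax x y \<le> dist x y"
  unfolding dmax_def
proof (subst Max_le_iff)
  show "\<forall>a\<in>range (\<lambda>i. \<bar>x $ i - y $ i\<bar>). a \<le> dist x y"
    using component_le_norm_cart[of "x - y"] by (auto simp: dist_norm)
qed auto

lemma dmax_triangle: "dmax x z \<le> dmax x y + dmax y z"
  unfolding dmax_def[of x z]
proof (subst Max_le_iff)
  show "\<forall>a\<in>range (\<lambda>i. \<bar>x $ i - z $ i\<bar>). a \<le> dmax x y + dmax y z"
  proof
    fix a assume "a \<in> range (\<lambda>i. \<bar>x $ i - z $ i\<bar>)"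
    then obtain i where a: "a = \<bar>x $ i - z $ i\<bar>" by auto
    have "\<bar>x $ i - z $ i\<bar> \<le> \<bar>x $ i - y $ i\<bar> + \<bar>y $ i - z $ i\<bar>" by simp
    also have "\<dots> \<le> dmax x y + dmax y z"
      using dmax_component_le[of x i y] dmax_component_le[of y i z] by simp
    finally show "a \<le> dmax x y + dmax y z" using a by simp
  qed
qed auto

lemma norm_le_card_dmax: "norm (x - y) \<le> real CARD('n) * dmax x (y::real^'n)"
proof -
  have "norm (x - y) \<le> (\<Sum>i\<in>UNIV. \<bar>(x - y) $ i\<bar>)" by (rule norm_le_l1_cart)
  also have "\<dots> \<le> (\<Sum>i\<in>(UNIV::'n set). dmax x y)"
    by (rule sum_mono) (simp add: dmax_component_le)
  finally show ?thesis by simp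
qed

section \<open>Joining points by pseudoorbits of a fixed size\<close>

definition ap_reach ::
  "(real^'n) set \<Rightarrow> (real^'n) set \<Rightarrow> (real^'n \<Rightarrow> real^'n) \<Rightarrow> real \<Rightarrow> real^'n \<Rightarrow> real^'n \<Rightarrow> bool"
  where "ap_reach M M0 F \<delta> x y \<longleftrightarrow> (\<exists>\<xi> n. ap_pseudoorbit M M0 F \<delta> x y \<xi> n)"

lemma ap_less_iff_reach: "ap_less M M0 F x y \<longleftrightarrow> (\<forall>\<delta>>0. ap_reach M M0 F \<delta> x y)"
  unfolding ap_less_def ap_reach_def ..

lemma ap_reach_step:
  assumes "x \<in> M" "y \<in> M" "x \<in> M0 \<Longrightarrow> y \<in> M0" "dmax y (F x) < \<delta>"
  shows "ap_reach M M0 F \<delta> x y"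
proof -
  have "ap_pseudoorbit M M0 F \<delta> x y (\<lambda>i. if i = 0 then x else y) 1"
    using assms unfolding ap_pseudoorbit_def by (auto simp: le_Suc_eq)
  then show ?thesis unfolding ap_reach_def by blast
qed

lemma ap_reach_trans:
  assumes "ap_reach M M0 F \<delta> x y" "ap_reach M M0 F \<delta> y z"
  shows "ap_reach M M0 F \<delta> x z"
proof -
  obtain \<xi>1 n1 \<xi>2 n2 where p1: "ap_pseudoorbit M M0 F \<delta> x y \<xi>1 n1"
    and p2: "ap_pseudoorbit M M0 F \<delta> y z \<xi>2 n2"
    using assms unfolding ap_reach_def by blast
  note p1 = p1[unfolded ap_pseudoorbit_def] and p2 = p2[unfolded ap_pseudoorbit_def]
  define \<xi> where "\<xi> i = (if i \<le> n1 then \<xi>1 i else \<xi>2 (i - n1))" for i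
  have shift: "\<xi> i = \<xi>2 (i - n1)" "\<xi> (Suc i) = \<xi>2 (Suc (i - n1))" if "n1 \<le> i" for i
    using that p1 p2 unfolding \<xi>_def by (auto simp: Suc_diff_le)
  have "ap_pseudoorbit M M0 F \<delta> x z \<xi> (n1 + n2)"
    unfolding ap_pseudoorbit_def
  proof (intro conjI allI impI)
    show "1 \<le> n1 + n2" using p1 by simp
    show "\<xi> i \<in> M" if "i \<le> n1 + n2" for i using p1 p2 that unfolding \<xi>_def by auto
    show "\<xi> 0 = x" using p1 unfolding \<xi>_def by auto
    show "\<xi> (n1 + n2) = z" using p1 p2 unfolding \<xi>_def by auto
  next
    fix i assume i: "i < n1 + n2" "\<xi> i \<in> M0"
    show "\<xi> (Suc i) \<in> M0"
    proof (cases "i < n1")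
      case True then show ?thesis using i p1 unfolding \<xi>_def by auto
    next
      case False then show ?thesis using i p2 shift[of i] by auto
    qed
  next
    fix i assume i: "i < n1 + n2"
    show "dmax (\<xi> (Suc i)) (F (\<xi> i)) < \<delta>"
    proof (cases "i < n1")
      case True then show ?thesis using i p1 unfolding \<xi>_def by auto
    next
      case False then show ?thesis using i p2 shift[of i] by auto
    qed
  qed
  then show ?thesis unfolding ap_reach_def by blast
qed

lemma ap_less_trans:
  assumes "ap_less M M0 F x y" "ap_less M M0 F y z"
  shows "ap_less M M0 F x z"
  using assms ap_reach_trans unfolding ap_less_iff_reach by blast

section \<open>Forward sets are closed and bounded\<close>

lemma ap_reach_move_end:
  assumes "ap_reach M M0 F \<epsilon> x w" "z \<in> M" "w \<in> M0 \<Longrightarrow> z \<in> M0" "dmax z w + \<epsilon> \<le> \<delta>"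
  shows "ap_reach M M0 F \<delta> x z"
proof -
  obtain \<xi> n where "ap_pseudoorbit M M0 F \<epsilon> x w \<xi> n"
    using assms(1) unfolding ap_reach_def by blast
  then have n: "1 \<le> n" and inM: "\<forall>i\<le>n. \<xi> i \<in> M" and ends: "\<xi> 0 = x" "\<xi> n = w"
    and inM0: "\<forall>i<n. \<xi> i \<in> M0 \<longrightarrow> \<xi> (Suc i) \<in> M0"
    and close: "\<forall>i<n. dmax (\<xi> (Suc i)) (F (\<xi> i)) < \<epsilon>"
    unfolding ap_pseudoorbit_def by auto
  have \<epsilon>_le_\<delta>: "\<epsilon> \<le> \<delta>" using assms(4) dmax_nonneg[of z w] by linarith
  define \<zeta> where "\<zeta> = \<xi>(n := z)"
  have "ap_pseudoorbit M M0 F \<delta> x z \<zeta> n"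
    unfolding ap_pseudoorbit_def
  proof (intro conjI allI impI)
    show "1 \<le> n" "\<zeta> n = z" using n by (simp_all add: \<zeta>_def)
    show "\<zeta> 0 = x" using n ends by (simp add: \<zeta>_def)
    show "\<zeta> i \<in> M" if "i \<le> n" for i using inM that assms(2) by (simp add: \<zeta>_def)
  next
    fix i assume i: "i < n" "\<zeta> i \<in> M0"
    then have "\<xi> (Suc i) \<in> M0" using inM0 by (simp add: \<zeta>_def)
    then show "\<zeta> (Suc i) \<in> M0" using ends(2) assms(3) by (auto simp: \<zeta>_def)
  next
    fix i assume i: "i < n"
    then have step: "dmax (\<xi> (Suc i)) (F (\<xi> i)) < \<epsilon>" and "\<zeta> i = \<xi> i"
      using close by (simp_all add: \<zeta>_def)
    show "dmax (\<zeta> (Suc i)) (F (\<zeta> i)) < \<delta>"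
    proof (cases "Suc i = n")
      case True
      have "dmax z (F (\<xi> i)) \<le> dmax z w + dmax w (F (\<xi> i))" by (rule dmax_triangle)
      also have "\<dots> < \<delta>" using step True ends(2) assms(4) by simp
      finally show ?thesis using True \<open>\<zeta> i = \<xi> i\<close> by (simp add: \<zeta>_def)
    next
      case False
      then show ?thesis using step \<open>\<zeta> i = \<xi> i\<close> \<epsilon>_le_\<delta> by (simp add: \<zeta>_def)
    qed
  qed
  then show ?thesis unfolding ap_reach_def by blast
qed

lemma closed_separation_radius:
  fixes S :: "'a::metric_space set"
  assumes "closed S"
  obtains r where "r > 0" "\<And>w. z \<notin> S \<Longrightarrow> dist z w < r \<Longrightarrow> w \<notin> S"
proof (cases "z \<in> S")
  case False
  have "open (- S)" using assms by (rule open_Compl)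
  then obtain r where "r > 0" "\<And>w. dist w z < r \<Longrightarrow> w \<in> - S"
    using False unfolding open_dist by blast
  then show ?thesis using that[of r] by (simp add: dist_commute)
next
  case True
  then show ?thesis using that[of 1] by simp
qed

lemma ap_forward_set_closed:
  assumes "closed M" "closed M0"
  shows "closed {z \<in> M. ap_less M M0 F x z}" (is "closed ?A")
proof -
  have "z \<in> ?A" if zc: "z \<in> closure ?A" for z
  proof -
    have "closure ?A \<subseteq> M" by (rule closure_minimal[OF _ assms(1)]) blast
    then have zM: "z \<in> M" using zc by blast
    obtain r where r: "r > 0" "\<And>w. z \<notin> M0 \<Longrightarrow> dist z w < r \<Longrightarrow> w \<notin> M0"
      using closed_separation_radius[OF assms(2)] by blast
    have "ap_reach M M0 F \<delta> x z" if "\<delta> > 0" for \<delta>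
    proof -
      obtain w where "w \<in> ?A" and zw: "dist z w < min (\<delta>/2) r"
        using closure_approachableD[OF zc, of "min (\<delta>/2) r"] \<open>\<delta> > 0\<close> r(1) by auto
      then have "ap_reach M M0 F (\<delta>/2) x w" using \<open>\<delta> > 0\<close> unfolding ap_less_iff_reach by simp
      moreover have "dmax z w + \<delta>/2 \<le> \<delta>" using dmax_le_dist[of z w] zw by linarith
      moreover have "w \<in> M0 \<Longrightarrow> z \<in> M0" using r(2) zw by fastforce
      ultimately show ?thesis using ap_reach_move_end[OF _ zM] by blast
    qed
    then show ?thesis using zM unfolding ap_less_iff_reach by blast
  qed
  then show ?thesis using closure_subset_eq by blast
qed

lemma ap_reach_end_near_image:
  assumes "ap_reach M M0 F \<delta> x z"
  shows "\<exists>v\<in>M. dmax z (F v) < \<delta>"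
proof -
  obtain \<xi> n where p: "ap_pseudoorbit M M0 F \<delta> x z \<xi> n"
    using assms unfolding ap_reach_def by blast
  then have "n - 1 < n" "Suc (n - 1) = n" "\<xi> n = z"
    unfolding ap_pseudoorbit_def by auto
  then have "\<xi> (n - 1) \<in> M" "dmax z (F (\<xi> (n - 1))) < \<delta>"
    using p unfolding ap_pseudoorbit_def by (metis less_imp_le, metis)
  then show ?thesis by blast
qed

lemma ap_forward_set_bounded:
  fixes x :: "real^'n"
  assumes "bounded (F ` M)"
  shows "bounded {z. ap_less M M0 F x z}"
proof -
  obtain B where B: "\<And>v. v \<in> F ` M \<Longrightarrow> norm v \<le> B"
    using assms unfolding bounded_iff by blast
  have "norm z \<le> B + real CARD('n)" if xz: "ap_less M M0 F x z" for z
  proof -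
    obtain v where v: "v \<in> M" "dmax z (F v) < 1"
      using xz ap_reach_end_near_image[of M M0 F 1 x z] unfolding ap_less_iff_reach by auto
    have "norm (z - F v) \<le> real CARD('n)"
      using norm_le_card_dmax[of z "F v"] v(2) mult_left_mono[of "dmax z (F v)" 1 "real CARD('n)"]
      by linarith
    moreover have "norm z \<le> norm (F v) + norm (z - F v)"
      using norm_triangle_ineq[of "F v" "z - F v"] by simp
    ultimately show ?thesis using B[of "F v"] v(1) by fastforce
  qed
  then show ?thesis unfolding bounded_iff by blast
qed

lemma funpow_in: "u \<in> S \<Longrightarrow> F ` S \<subseteq> S \<Longrightarrow> (F ^^ k) u \<in> S"
  by (induction k) auto

text \<open>Since M1 is invariant, a point whose orbit enters M0 was in M0 from the start.\<close>
lemma funpow_M0_back: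
  assumes "u \<in> M" "M = M0 \<union> M1" "M0 \<inter> M1 = {}" "F ` M1 \<subseteq> M1" "(F ^^ k) u \<in> M0"
  shows "u \<in> M0"
proof (rule ccontr)
  assume "u \<notin> M0"
  then have "(F ^^ k) u \<in> M1" using assms(1,2,4) funpow_in[of u M1] by blast
  then show False using assms(3,5) by auto
qed

lemma ap_reach_orbit_segment:
  assumes "M = M0 \<union> M1" "M0 \<inter> M1 = {}" "F ` M \<subseteq> M" "F ` M0 \<subseteq> M0" "F ` M1 \<subseteq> M1"
    and "u \<in> M" "y \<in> M" "u \<in> M0 \<Longrightarrow> y \<in> M0" "dmax y ((F ^^ Suc k) u) < \<delta>"
  shows "ap_reach M M0 F \<delta> u y"
  using assms(6-9)
proof (induction k arbitrary: u)
  case 0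
  then show ?case by (intro ap_reach_step) auto
next
  case (Suc k)
  have "F u \<in> M" using Suc.prems(1) assms(3) by blast
  have "dmax (F u) (F u) < \<delta>"
    using Suc.prems(4) dmax_nonneg[of y "(F ^^ Suc (Suc k)) u"] dmax_self[of "F u"] by linarith
  then have "ap_reach M M0 F \<delta> u (F u)"
    using Suc.prems(1) \<open>F u \<in> M\<close> assms(4) by (intro ap_reach_step) auto
  moreover have "ap_reach M M0 F \<delta> (F u) y"
  proof (rule Suc.IH[OF \<open>F u \<in> M\<close> Suc.prems(2)])
    show "F u \<in> M0 \<Longrightarrow> y \<in> M0"
      using funpow_M0_back[OF Suc.prems(1) assms(1,2,5), of 1] Suc.prems(3) by simp
    show "dmax y ((F ^^ Suc k) (F u)) < \<delta>" using Suc.prems(4) by (simp add: funpow_swap1)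
  qed
  ultimately show ?case by (rule ap_reach_trans)
qed

section \<open>Omega-limit sets\<close>

definition omega_limit :: "(real^'n \<Rightarrow> real^'n) \<Rightarrow> real^'n \<Rightarrow> (real^'n) set" where
  "omega_limit F u = {y. \<forall>e>0. \<forall>N. \<exists>k\<ge>N. dist ((F ^^ k) u) y < e}"

lemma omega_limitD:
  assumes "y \<in> omega_limit F u" "e > 0"
  obtains k where "k \<ge> N" "dist ((F ^^ k) u) y < e"
  using assms unfolding omega_limit_def by blast

lemma omega_limit_in:
  assumes "closed S" "u \<in> S" "F ` S \<subseteq> S" "y \<in> omega_limit F u"
  shows "y \<in> S"
proof -
  have "\<exists>v\<in>S. dist v y < e" if "e > 0" for e
  proof -
    obtain k where "dist ((F ^^ k) u) y < e" using omega_limitD[OF assms(4) \<open>e > 0\<close>] .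
    then show ?thesis using funpow_in[OF assms(2,3), of k] by blast
  qed
  then show ?thesis using closed_approachable[OF assms(1)] by blast
qed

text \<open>A bounded forward orbit has a limit point (Bolzano--Weierstrass).\<close>
lemma omega_limit_nonempty:
  assumes "u \<in> M" "F ` M \<subseteq> M" "bounded (F ` M)"
  shows "omega_limit F u \<noteq> {}"
proof -
  define f where "f k = (F ^^ Suc k) u" for k
  have orbit: "\<forall>k. f k \<in> closure (F ` M)"
    using funpow_in[OF assms(1,2)] closure_subset[of "F ` M"] unfolding f_def by auto
  have "seq_compact (closure (F ` M))"
    using assms(3) by (intro bounded_closed_imp_seq_compact) auto
  then obtain l r where r: "strict_mono r" "(f \<circ> r) \<longlonglongrightarrow> l"
    using orbit by (rule seq_compactE)
  have "l \<in> omega_limit F u" unfolding omega_limit_def mem_Collect_eq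
  proof (intro allI impI)
    fix e :: real and N :: nat assume "e > 0"
    with r(2) have "eventually (\<lambda>n. dist ((f \<circ> r) n) l < e) sequentially" by (rule tendstoD)
    then obtain n0 where n0: "\<And>n. n \<ge> n0 \<Longrightarrow> dist ((f \<circ> r) n) l < e"
      unfolding eventually_sequentially by blast
    have "dist ((F ^^ Suc (r (max n0 N))) u) l < e" using n0[of "max n0 N"] by (simp add: f_def)
    moreover have "Suc (r (max n0 N)) \<ge> N" using seq_suble[OF r(1), of "max n0 N"] by simp
    ultimately show "\<exists>k\<ge>N. dist ((F ^^ k) u) l < e" by blast
  qed
  then show ?thesis by blast
qed

lemma ap_less_omega_limit:
  assumes "M = M0 \<union> M1" "M0 \<inter> M1 = {}" "F ` M \<subseteq> M" "F ` M0 \<subseteq> M0" "F ` M1 \<subseteq> M1"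
    and "closed M" "closed M0" "u \<in> M" "y \<in> omega_limit F u"
  shows "ap_less M M0 F u y"
  unfolding ap_less_iff_reach
proof (intro allI impI)
  fix \<delta> :: real assume "\<delta> > 0"
  then obtain k where k: "k \<ge> 1" "dist ((F ^^ k) u) y < \<delta>"
    by (rule omega_limitD[OF assms(9)])
  have "dmax y ((F ^^ Suc (k - 1)) u) < \<delta>"
    using k dmax_le_dist[of y "(F ^^ k) u"] by (simp add: dist_commute)
  moreover have "y \<in> M" using omega_limit_in[OF assms(6,8,3,9)] .
  moreover have "u \<in> M0 \<Longrightarrow> y \<in> M0" using omega_limit_in[OF assms(7) _ assms(4,9)] .
  ultimately show "ap_reach M M0 F \<delta> u y"
    using ap_reach_orbit_segment[OF assms(1-5,8)] by blast
qed

text \<open>An omega-limit point y is ap-recurrent, provided it lies in M0 only if the orbit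
  does: from y jump near F^(a+1) u, where F^a u is so close to y that F^(a+1) u is
  close to F y, and follow the orbit until it returns close to y.\<close>
lemma omega_limit_recurrent:
  assumes "M = M0 \<union> M1" "M0 \<inter> M1 = {}" "F ` M \<subseteq> M" "F ` M0 \<subseteq> M0" "F ` M1 \<subseteq> M1"
    and "closed M" "closed M0" "continuous_on M F"
    and "u \<in> M" "y \<in> omega_limit F u" "y \<in> M0 \<Longrightarrow> u \<in> M0"
  shows "y \<in> R_ap M M0 F"
proof -
  have yM: "y \<in> M" using omega_limit_in[OF assms(6,9,3,10)] .
  have "ap_reach M M0 F \<delta> y y" if "\<delta> > 0" for \<delta>
  proof -
    obtain \<eta> where "\<eta> > 0" and \<eta>: "\<forall>v\<in>M. dist v y < \<eta> \<longrightarrow> dist (F v) (F y) < \<delta>"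
      using assms(8) yM \<open>\<delta> > 0\<close> unfolding continuous_on_iff by blast
    obtain a where a: "dist ((F ^^ a) u) y < \<eta>"
      using omega_limitD[OF assms(10) \<open>\<eta> > 0\<close>] .
    obtain b where b: "b \<ge> a + 2" "dist ((F ^^ b) u) y < \<delta>"
      using omega_limitD[OF assms(10) \<open>\<delta> > 0\<close>] .
    define v where "v = (F ^^ Suc a) u"
    have vM: "v \<in> M" unfolding v_def using funpow_in[OF assms(9,3)] .
    have "dist v (F y) < \<delta>"
      using \<eta> funpow_in[OF assms(9,3), of a] a by (simp add: v_def)
    then have "dmax v (F y) < \<delta>" using dmax_le_dist[of v "F y"] by linarith
    moreover have "y \<in> M0 \<Longrightarrow> v \<in> M0"
      using assms(11) funpow_in[of u M0 F "Suc a"] assms(4) by (simp add: v_def)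
    ultimately have "ap_reach M M0 F \<delta> y v" using yM vM by (intro ap_reach_step)
    moreover have "ap_reach M M0 F \<delta> v y"
    proof (rule ap_reach_orbit_segment[OF assms(1-5) vM yM])
      show "v \<in> M0 \<Longrightarrow> y \<in> M0"
        using funpow_M0_back[OF assms(9,1,2,5), of "Suc a"] omega_limit_in[OF assms(7) _ assms(4,10)]
        by (simp add: v_def)
      have "Suc (b - a - 2) + Suc a = b" using b(1) by simp
      then have "(F ^^ Suc (b - a - 2)) v = (F ^^ b) u"
        unfolding v_def by (metis comp_apply funpow_add)
      then show "dmax y ((F ^^ Suc (b - a - 2)) v) < \<delta>"
        using dmax_le_dist[of y "(F ^^ b) u"] b(2) by (simp add: dist_commute)
    qed
    ultimately show ?thesis by (rule ap_reach_trans)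
  qed
  then show ?thesis using yM unfolding R_ap_def ap_equiv_def ap_less_iff_reach by blast
qed

text \<open>Every point z is ap-below some ap-recurrent point: an omega-limit point w of z
  works unless w lies in M0 while z does not; then an omega-limit point of w works.\<close>
lemma exists_recurrent_above:
  assumes "M = M0 \<union> M1" "M0 \<inter> M1 = {}" "F ` M \<subseteq> M" "F ` M0 \<subseteq> M0" "F ` M1 \<subseteq> M1"
    and "closed M" "closed M0" "continuous_on M F" "bounded (F ` M)" "z \<in> M"
  shows "\<exists>y \<in> R_ap M M0 F. ap_less M M0 F z y"
proof -
  note setting = assms(1-5)
  obtain w where w: "w \<in> omega_limit F z" using omega_limit_nonempty[OF assms(10,3,9)] by blast
  have wM: "w \<in> M" using omega_limit_in[OF assms(6,10,3) w] .
  have zw: "ap_less M M0 F z w" using ap_less_omega_limit[OF setting assms(6,7,10) w] .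
  show ?thesis
  proof (cases "w \<in> M0")
    case True
    obtain y where y: "y \<in> omega_limit F w" using omega_limit_nonempty[OF wM assms(3,9)] by blast
    have "y \<in> R_ap M M0 F" using omega_limit_recurrent[OF setting assms(6-8) wM y] True by blast
    moreover have "ap_less M M0 F w y" using ap_less_omega_limit[OF setting assms(6,7) wM y] .
    ultimately show ?thesis using ap_less_trans[OF zw] by blast
  next
    case False
    then have "w \<in> R_ap M M0 F" using omega_limit_recurrent[OF setting assms(6-8,10) w] by blast
    then show ?thesis using zw by blast
  qed
qed

section \<open>Quasiattractors\<close>

lemma quasiattractor_class_eq_forward_set:
  assumes "ap_quasiattractor_of M M0 F x"
    and "\<And>z. z \<in> M \<Longrightarrow> \<exists>y \<in> R_ap M M0 F. ap_less M M0 F z y"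
  shows "ap_class M M0 F x = {z \<in> M. ap_less M M0 F x z}"
proof (intro equalityI subsetI)
  fix z assume "z \<in> ap_class M M0 F x"
  then show "z \<in> {z \<in> M. ap_less M M0 F x z}"
    unfolding ap_class_def R_ap_def ap_equiv_def by simp
next
  have maximal: "\<And>y. y \<in> R_ap M M0 F \<Longrightarrow> ap_less M M0 F x y \<Longrightarrow>
      ap_class M M0 F x = ap_class M M0 F y"
    using assms(1) unfolding ap_quasiattractor_of_def by simp
  fix z assume "z \<in> {z \<in> M. ap_less M M0 F x z}"
  then have zM: "z \<in> M" and xz: "ap_less M M0 F x z" by simp_all
  obtain y where yR: "y \<in> R_ap M M0 F" and zy: "ap_less M M0 F z y" using assms(2)[OF zM] by blast
  have "y \<in> ap_class M M0 F y" using yR unfolding ap_class_def R_ap_def by simp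
  then have "y \<in> ap_class M M0 F x" using maximal[OF yR ap_less_trans[OF xz zy]] by simp
  then have "ap_less M M0 F y x" unfolding ap_class_def ap_equiv_def by simp
  then have zx: "ap_less M M0 F z x" by (rule ap_less_trans[OF zy])
  have "ap_less M M0 F z z" by (rule ap_less_trans[OF zx xz])
  then show "z \<in> ap_class M M0 F x"
    using zM xz zx unfolding ap_class_def R_ap_def ap_equiv_def by simp
qed

theorem mainTheorem5:
  fixes M M0 M1 :: "(real^'n) set" and F :: "real^'n \<Rightarrow> real^'n" and x :: "real^'n"
  assumes "closed M"
    and "continuous_on M F"
    and "F ` M \<subseteq> M"
    and "bounded (F ` M)"
    and "M = M0 \<union> M1" and "M0 \<inter> M1 = {}"
    and "closed M0"
    and "F ` M0 \<subseteq> M0" and "F ` M1 \<subseteq> M1"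
    and "ap_quasiattractor_of M M0 F x"
  shows "(\<forall>z \<in> M. ap_less M M0 F x z \<longleftrightarrow> z \<in> ap_class M M0 F x)
         \<and> compact (ap_class M M0 F x)"
proof -
  have class_eq: "ap_class M M0 F x = {z \<in> M. ap_less M M0 F x z}"
    by (rule quasiattractor_class_eq_forward_set[OF assms(10)
          exists_recurrent_above[OF assms(5,6,3,8,9,1,7,2,4)]])
  have "closed (ap_class M M0 F x)"
    unfolding class_eq by (rule ap_forward_set_closed[OF assms(1,7)])
  moreover have "bounded (ap_class M M0 F x)"
    unfolding class_eq by (rule bounded_subset[OF ap_forward_set_bounded[OF assms(4)]]) blast
  ultimately have "compact (ap_class M M0 F x)" by (simp add: compact_eq_bounded_closed)
  then show ?thesis by (simp add: class_eq)
qed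

end
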